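(* For real hopping amplitudes $s,t$ with $|s|\neq |t|$, and arbitrary real interface hopping amplitudes $u_L,u_R$, the SSH interface Hamiltonian $H_{\rm SSH}$ has a bulk spectral gap (around $0$) and an odd number of zero modes, i.e. $\dim\ker H_{\rm SSH}$ is odd.
   Context: Pauli matrices $\sigma_1=\begin{pmatrix}0&1\\1&0\end{pmatrix}$, $\sigma_3=\begin{pmatrix}1&0\\0&-1\end{pmatrix}$. Consider the Hilbert space $\ell^2(-\mathbf{N};\mathbf{C}^2)\oplus\mathbf{C}\oplus\ell^2(\mathbf{N};\mathbf{C}^2)$, with sequences $\psi=(\psi_n)$, $\psi_n\in\mathbf{C}^2$ for $n\neq 0$ and $\psi_0\in\mathbf{C}$. The interface Hamiltonian $H_{\rm int}(A_L,V_L,A_R,V_R;B_L,B_R,W)$ acts as $(H_{\rm int}\psi)_n=A_R^*\psi_{n-1}+A_R\psi_{n+1}+V_R\psi_n$ for $n\geq 2$; $=B_R^*\psi_0+A_R\psi_2+V_R\psi_1$ for $n=1$; $=B_L^*\psi_{-1}+B_R\psi_1+W\psi_0$ for $n=0$; $=A_L^*\psi_{-2}+B_L\psi_0+V_L\psi_{-1}$ for $n=-1$; $=A_L^*\psi_{n-1}+A_L\psi_{n+1}+V_L\psi_n$ for $n\leq -2$, where $A_L,A_R,V_L,V_R$ are $2\times2$ matrices, $B_L^*,B_R$ are $1\times 2$ matrices and $W\in\mathbf{R}$. The SSH model Hamiltonian is $H_{\rm SSH}=H_{\rm int}(A,V,A,V;B_L,B_R,0)$ with $V=s\sigma_1$,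 $A=\begin{pmatrix}0&0\\t&0\end{pmatrix}$, $B_R=(u_R\;\;0)$, $B_L^*=(0\;\;u_L)$, $s,t,u_L,u_R\in\mathbf{R}$. It is chiral symmetric with respect to a sublattice grading (on each side the two components of $\mathbf{C}^2$ are the two sublattices, arranged so that the left side is the mirror image of the right, and the $n=0$ site belongs to one sublattice), i.e. $H_{\rm SSH}$ anticommutes with this grading. *)

theory Defs
  imports "HOL-Analysis.Analysis" "HOL-Library.Function_Algebras"
begin

definition adjM :: "complex^2^2 \<Rightarrow> complex^2^2" where
  "adjM M = (\<chi> i j. cnj (M $ j $ i))"

definition sigma1 :: "complex^2^2" where
  "sigma1 = vector [vector [0, 1], vector [1, 0]]"

definition sigma3 :: "complex^2^2" where
  "sigma3 = vector [vector [1, 0], vector [0, -1]]"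

text \<open>States of the interface Hilbert space l2(-N;C^2) + C + l2(N;C^2):
  a pair (f, c) with f :: int => C^2 (the entries f n for n \<noteq> 0) and c = psi_0 \<in> C.
  By convention f 0 = 0 (the slot 0 of f is unused).\<close>

type_synonym istate = "(int \<Rightarrow> complex^2) \<times> complex"

definition sq_summable :: "(int \<Rightarrow> complex^2) \<Rightarrow> bool" where
  "sq_summable f \<longleftrightarrow> (\<lambda>n. (norm (f n))\<^sup>2) summable_on UNIV"

definition l2Z :: "(int \<Rightarrow> complex^2) set" where
  "l2Z = {f. sq_summable f}"

definition l2norm :: "(int \<Rightarrow> complex^2) \<Rightarrow> real" where
  "l2norm f = sqrt (\<Sum>\<^sub>\<infinity>n. (norm (f n))\<^sup>2)"

definition intSpace :: "istate set" where
  "intSpace = {(f, c). f 0 = 0 \<and> sq_summable f}"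

definition scaleI :: "complex \<Rightarrow> istate \<Rightarrow> istate" where
  "scaleI a x = ((\<lambda>n. a *s fst x n), a * snd x)"

text \<open>The 1x2 matrix B_R is represented by bR with B_R v = bR$1 * v$1 + bR$2 * v$2, hence
  B_R^* c = c * conj(bR). The 1x2 matrix B_L^* is represented by bLs with
  B_L^* v = bLs$1 * v$1 + bLs$2 * v$2, hence B_L c = c * conj(bLs).\<close>

definition rowmul :: "complex^2 \<Rightarrow> complex^2 \<Rightarrow> complex" where
  "rowmul b v = b$1 * v$1 + b$2 * v$2"

definition colmul :: "complex^2 \<Rightarrow> complex \<Rightarrow> complex^2" where
  "colmul b c = (\<chi> i. c * cnj (b$i))"

definition Hint ::
  "complex^2^2 \<Rightarrow> complex^2^2 \<Rightarrow> complex^2^2 \<Rightarrow> complex^2^2 \<Rightarrow>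
   complex^2 \<Rightarrow> complex^2 \<Rightarrow> real \<Rightarrow> istate \<Rightarrow> istate" where
  "Hint A_L V_L A_R V_R bLs bR W x =
    (let f = fst x; c = snd x in
     ((\<lambda>n. if n \<ge> 2 then adjM A_R *v f (n - 1) + A_R *v f (n + 1) + V_R *v f n
           else if n = 1 then colmul bR c + A_R *v f 2 + V_R *v f 1
           else if n = -1 then adjM A_L *v f (-2) + colmul bLs c + V_L *v f (-1)
           else if n \<le> -2 then adjM A_L *v f (n - 1) + A_L *v f (n + 1) + V_L *v f n
           else 0),
      rowmul bLs (f (-1)) + rowmul bR (f 1) + complex_of_real W * c))"

definition ssh_A :: "real \<Rightarrow> complex^2^2" where
  "ssh_A t = vector [vector [0, 0], vector [complex_of_real t, 0]]"

definition ssh_V :: "real \<Rightarrow> complex^2^2" where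
  "ssh_V s = (\<chi> i j. complex_of_real s * sigma1 $ i $ j)"

definition H_SSH :: "real \<Rightarrow> real \<Rightarrow> real \<Rightarrow> real \<Rightarrow> istate \<Rightarrow> istate" where
  "H_SSH s t uL uR = Hint (ssh_A t) (ssh_V s) (ssh_A t) (ssh_V s)
      (vector [0, complex_of_real uL]) (vector [complex_of_real uR, 0]) 0"

definition kerI :: "(istate \<Rightarrow> istate) \<Rightarrow> istate set" where
  "kerI H = {x \<in> intSpace. H x = ((\<lambda>_. 0), 0)}"

definition cdimI :: "istate set \<Rightarrow> nat" where
  "cdimI S = vector_space.dim scaleI S"

definition Hbulk :: "complex^2^2 \<Rightarrow> complex^2^2 \<Rightarrow> (int \<Rightarrow> complex^2) \<Rightarrow> (int \<Rightarrow> complex^2)" where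
  "Hbulk A V f = (\<lambda>n. adjM A *v f (n - 1) + A *v f (n + 1) + V *v f n)"

definition in_resolvent_l2 :: "((int \<Rightarrow> complex^2) \<Rightarrow> (int \<Rightarrow> complex^2)) \<Rightarrow> complex \<Rightarrow> bool" where
  "in_resolvent_l2 T lam \<longleftrightarrow>
     bij_betw (\<lambda>f n. T f n - lam *s f n) l2Z l2Z \<and>
     (\<exists>C. \<forall>f\<in>l2Z. l2norm f \<le> C * l2norm (\<lambda>n. T f n - lam *s f n))"

definition spectrum_l2 :: "((int \<Rightarrow> complex^2) \<Rightarrow> (int \<Rightarrow> complex^2)) \<Rightarrow> complex set" where
  "spectrum_l2 T = {lam. \<not> in_resolvent_l2 T lam}"

definition bulk_gap :: "complex^2^2 \<Rightarrow> complex^2^2 \<Rightarrow> bool" where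
  "bulk_gap A V \<longleftrightarrow> (\<exists>\<delta>>0. \<forall>e::real. \<bar>e\<bar> < \<delta> \<longrightarrow> complex_of_real e \<notin> spectrum_l2 (Hbulk A V))"

end

theory Submission
  imports Defs
begin

text \<open>
  Bulk gap: the SSH bulk Hamiltonian H exchanges the two components of f and acts on each of
  them as s + t S, with S a shift, so that ||H f|| >= ||s| - |t|| ||f||. Hence H - e is injective
  with bounded inverse for |e| < ||s| - |t||. It is onto because (H - e)(H + e) = H^2 - e^2 acts
  on each component as (s^2 + t^2 - e^2) + s t (S + S^-1), which factors into two first-order
  difference operators 1 - beta S and 1 - beta S^-1 with |beta| < 1, inverted by geometric series.

  Zero modes: H_SSH psi = 0 decouples into first-order recursions along the two half-lines. On
  each side the amplitudes on one sublattice grow geometrically, hence vanish by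
  square-summability, while those on the other sublattice decay. If |t| < |s|, only the sublattice
  of the central site carries decaying tails, both fixed by psi_0: the kernel is a line. If
  |s| < |t|, the other sublattice carries two free tails a, b, coupled only by
  u_L b + u_R a = 0, and psi_0 survives only when u_L = u_R = 0: the kernel has dimension 1 or 3.
\<close>

definition l2_summable :: "(int \<Rightarrow> 'a::real_normed_vector) \<Rightarrow> bool" where
  "l2_summable x \<longleftrightarrow> (\<lambda>n. (norm (x n))\<^sup>2) summable_on UNIV"

definition l2_norm :: "(int \<Rightarrow> 'a::real_normed_vector) \<Rightarrow> real" where
  "l2_norm x = sqrt (\<Sum>\<^sub>\<infinity>n. (norm (x n))\<^sup>2)"

lemma l2Z_eq: "l2Z = {f. l2_summable f}"
  by (simp add: l2Z_def sq_summable_def l2_summable_def)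

lemma l2norm_eq_l2_norm: "l2norm = l2_norm"
  by (simp add: fun_eq_iff l2norm_def l2_norm_def)

lemma l2_norm_nonneg: "0 \<le> l2_norm x"
  by (simp add: l2_norm_def infsum_nonneg)

lemma L2_set_le_l2_norm:
  assumes "l2_summable x"
  shows "L2_set (\<lambda>n. norm (x n)) F \<le> l2_norm x"
proof (cases "finite F")
  case True
  have "(\<Sum>n\<in>F. (norm (x n))\<^sup>2) \<le> (\<Sum>\<^sub>\<infinity>n. (norm (x n))\<^sup>2)"
    using assms True unfolding l2_summable_def by (intro finite_sum_le_infsum) auto
  then show ?thesis unfolding L2_set_def l2_norm_def by (rule real_sqrt_le_mono)
qed (simp add: l2_norm_nonneg)

lemma L2_set_bounded_imp_l2:
  assumes "\<And>F. finite F \<Longrightarrow> L2_set (\<lambda>n. norm (x n)) F \<le> B"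
  shows "l2_summable x \<and> l2_norm x \<le> B"
proof -
  have "0 \<le> B" using assms[of "{}"] by simp
  have partial: "(\<Sum>n\<in>F. (norm (x n))\<^sup>2) \<le> B\<^sup>2" if "finite F" for F
  proof -
    have "(\<Sum>n\<in>F. (norm (x n))\<^sup>2) = (L2_set (\<lambda>n. norm (x n)) F)\<^sup>2"
      by (simp add: L2_set_def sum_nonneg)
    also have "\<dots> \<le> B\<^sup>2" using assms[OF that] by (simp add: power_mono)
    finally show ?thesis .
  qed
  have l2: "l2_summable x" unfolding l2_summable_def
    by (rule nonneg_bdd_above_summable_on) (use partial in \<open>auto simp: bdd_above_def\<close>)
  have "(\<Sum>\<^sub>\<infinity>n. (norm (x n))\<^sup>2) \<le> B\<^sup>2"
    using l2 unfolding l2_summable_def by (rule infsum_le_finite_sums) (use partial in auto)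
  then have "l2_norm x \<le> sqrt (B\<^sup>2)" unfolding l2_norm_def by (rule real_sqrt_le_mono)
  with \<open>0 \<le> B\<close> l2 show ?thesis by simp
qed

lemma norm_le_l2_norm: "l2_summable x \<Longrightarrow> norm (x n) \<le> l2_norm x"
  using L2_set_le_l2_norm[of x "{n}"] by simp

lemma l2_norm_le_0_imp_zero: "l2_summable x \<Longrightarrow> l2_norm x \<le> 0 \<Longrightarrow> x n = 0"
  using norm_le_l2_norm[of x n] by (metis norm_le_zero_iff order_trans)

lemma l2_zero: "l2_summable (\<lambda>n. 0) \<and> l2_norm (\<lambda>n. 0) = 0"
  by (simp add: l2_summable_def l2_norm_def)

lemma l2_add:
  assumes "l2_summable x" "l2_summable y"
  shows "l2_summable (\<lambda>n. x n + y n) \<and> l2_norm (\<lambda>n. x n + y n) \<le> l2_norm x + l2_norm y"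
proof (rule L2_set_bounded_imp_l2)
  fix F :: "int set"
  have "L2_set (\<lambda>n. norm (x n + y n)) F \<le> L2_set (\<lambda>n. norm (x n) + norm (y n)) F"
    by (rule L2_set_mono) (auto intro: norm_triangle_ineq)
  also have "\<dots> \<le> L2_set (\<lambda>n. norm (x n)) F + L2_set (\<lambda>n. norm (y n)) F"
    by (rule L2_set_triangle_ineq)
  also have "\<dots> \<le> l2_norm x + l2_norm y"
    using assms by (intro add_mono L2_set_le_l2_norm)
  finally show "L2_set (\<lambda>n. norm (x n + y n)) F \<le> l2_norm x + l2_norm y" .
qed

lemma l2_scaled:
  assumes "l2_summable x" and "\<And>n. norm (y n) = k * norm (x n)" and "0 \<le> k"
  shows "l2_summable y \<and> l2_norm y = k * l2_norm x"
proof -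
  have sq: "(\<lambda>n. (norm (y n))\<^sup>2) = (\<lambda>n. k\<^sup>2 * (norm (x n))\<^sup>2)"
    by (simp add: assms(2) power_mult_distrib)
  have "l2_summable y"
    using assms(1) unfolding l2_summable_def sq by (rule summable_on_cmult_right)
  moreover have "l2_norm y = sqrt (k\<^sup>2 * (\<Sum>\<^sub>\<infinity>n. (norm (x n))\<^sup>2))"
    unfolding l2_norm_def sq by (simp add: infsum_cmult_right')
  ultimately show ?thesis using \<open>0 \<le> k\<close> by (simp add: l2_norm_def real_sqrt_mult)
qed

lemma l2_scaleR:
  assumes "l2_summable x"
  shows "l2_summable (\<lambda>n. c *\<^sub>R x n) \<and> l2_norm (\<lambda>n. c *\<^sub>R x n) = \<bar>c\<bar> * l2_norm x"
  using l2_scaled[OF assms, of "\<lambda>n. c *\<^sub>R x n" "\<bar>c\<bar>"] by simp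

lemma l2_bounded_map:
  assumes "l2_summable x" and "\<And>n. norm (y n) \<le> k * norm (x n)"
  shows "l2_summable y"
proof -
  have "(\<lambda>n. (norm (y n))\<^sup>2) summable_on UNIV"
  proof (rule summable_on_comparison_test)
    show "(\<lambda>n. k\<^sup>2 * (norm (x n))\<^sup>2) summable_on UNIV"
      using assms(1) unfolding l2_summable_def by (rule summable_on_cmult_right)
    show "(norm (y n))\<^sup>2 \<le> k\<^sup>2 * (norm (x n))\<^sup>2" for n
      using power_mono[OF assms(2)[of n] norm_ge_zero] by (simp add: power_mult_distrib)
  qed simp
  then show ?thesis by (simp add: l2_summable_def)
qed

lemma l2_reindex:
  assumes "bij h"
  shows "l2_summable (\<lambda>n. x (h n)) \<longleftrightarrow> l2_summable x"
    and "l2_norm (\<lambda>n. x (h n)) = l2_norm x"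
  using summable_on_reindex_bij_betw[OF assms, of "\<lambda>n. (norm (x n))\<^sup>2"]
    infsum_reindex_bij_betw[OF assms, of "\<lambda>n. (norm (x n))\<^sup>2"]
  by (simp_all add: l2_summable_def l2_norm_def)

lemma bij_shift: "bij (\<lambda>n::int. n + d)"
  by (rule bij_betwI[where g="\<lambda>n. n - d"]) auto

lemma bij_uminus_int: "bij (\<lambda>n::int. - n)"
  by (rule bij_betwI[where g=uminus]) auto

lemma l2_shift: "l2_summable (\<lambda>n. x (n + d)) \<longleftrightarrow> l2_summable x" "l2_norm (\<lambda>n. x (n + d)) = l2_norm x"
  using l2_reindex[OF bij_shift] by blast+

lemma norm_vec2: "(norm (v :: 'a::real_normed_vector^2))\<^sup>2 = (norm (v$1))\<^sup>2 + (norm (v$2))\<^sup>2"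
  by (simp add: norm_vec_def L2_set_def sum_2)

lemma l2_summable_vec2_iff:
  fixes f :: "int \<Rightarrow> 'a::real_normed_vector^2"
  shows "l2_summable f \<longleftrightarrow> l2_summable (\<lambda>n. f n $ 1) \<and> l2_summable (\<lambda>n. f n $ 2)"
proof
  assume "l2_summable f"
  then have "l2_summable (\<lambda>n. f n $ i)" for i
    by (rule l2_bounded_map[where k=1]) (simp add: Finite_Cartesian_Product.norm_nth_le)
  then show "l2_summable (\<lambda>n. f n $ 1) \<and> l2_summable (\<lambda>n. f n $ 2)" by simp
next
  assume "l2_summable (\<lambda>n. f n $ 1) \<and> l2_summable (\<lambda>n. f n $ 2)"
  then show "l2_summable f"
    unfolding l2_summable_def norm_vec2 by (auto intro: summable_on_add)
qed

lemma l2_norm_vec2: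
  fixes f :: "int \<Rightarrow> 'a::real_normed_vector^2"
  assumes "l2_summable f"
  shows "(l2_norm f)\<^sup>2 = (l2_norm (\<lambda>n. f n $ 1))\<^sup>2 + (l2_norm (\<lambda>n. f n $ 2))\<^sup>2"
  using assms unfolding l2_summable_vec2_iff
  by (simp add: l2_norm_def l2_summable_def norm_vec2 infsum_add infsum_nonneg)

lemma norm_nth_le_l2_norm:
  fixes f :: "int \<Rightarrow> 'a::real_normed_vector^'n"
  shows "l2_summable f \<Longrightarrow> norm (f n $ i) \<le> l2_norm f"
  using norm_le_l2_norm[of f n] Finite_Cartesian_Product.norm_nth_le[of "f n" i] by linarith

section \<open>Difference equations with square-summable solutions\<close>

lemma summable_geometric_shifts:
  fixes y :: "int \<Rightarrow> 'a::banach"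
  assumes "\<bar>\<beta>\<bar> < 1" and "l2_summable y"
  shows "summable (\<lambda>k. (\<beta> ^ k) *\<^sub>R y (n - d * int k))"
proof (rule summable_comparison_test)
  show "\<exists>N. \<forall>k\<ge>N. norm ((\<beta> ^ k) *\<^sub>R y (n - d * int k)) \<le> \<bar>\<beta>\<bar> ^ k * l2_norm y"
    using norm_le_l2_norm[OF assms(2)] by (auto simp: power_abs intro!: exI[of _ 0] mult_left_mono)
  show "summable (\<lambda>k. \<bar>\<beta>\<bar> ^ k * l2_norm y)"
    using assms(1) by (simp add: summable_geometric summable_mult2)
qed

lemma l2_geometric_shifts_partial:
  fixes y :: "int \<Rightarrow> 'a::real_normed_vector"
  assumes \<beta>: "\<bar>\<beta>\<bar> < 1" and y: "l2_summable y"
  shows "l2_summable (\<lambda>n. \<Sum>k<K. (\<beta> ^ k) *\<^sub>R y (n - d * int k)) \<and>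
    l2_norm (\<lambda>n. \<Sum>k<K. (\<beta> ^ k) *\<^sub>R y (n - d * int k)) \<le> l2_norm y / (1 - \<bar>\<beta>\<bar>)"
proof -
  define summand where "summand = (\<lambda>k n. (\<beta> ^ k) *\<^sub>R y (n - d * int k))"
  have partial: "l2_summable (\<lambda>n. \<Sum>k<K. summand k n) \<and>
      l2_norm (\<lambda>n. \<Sum>k<K. summand k n) \<le> (\<Sum>k<K. \<bar>\<beta>\<bar> ^ k) * l2_norm y" for K
  proof (induction K)
    case 0
    then show ?case by (simp add: l2_zero)
  next
    case (Suc K)
    have "l2_summable (\<lambda>n. y (n - d * int K))" "l2_norm (\<lambda>n. y (n - d * int K)) = l2_norm y"
      using y l2_shift[of y "- (d * int K)"] by simp_all
    then have "l2_summable (summand K) \<and> l2_norm (summand K) = \<bar>\<beta>\<bar> ^ K * l2_norm y"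
      using l2_scaled[of "\<lambda>n. y (n - d * int K)" "summand K" "\<bar>\<beta>\<bar> ^ K"]
      by (simp add: summand_def power_abs)
    then show ?case
      using l2_add[of "\<lambda>n. \<Sum>k<K. summand k n" "summand K"] Suc by (simp add: distrib_right)
  qed
  have "(\<Sum>k<K. \<bar>\<beta>\<bar> ^ k) \<le> 1 / (1 - \<bar>\<beta>\<bar>)"
    using sum_le_suminf[of "\<lambda>k. \<bar>\<beta>\<bar> ^ k" "{..<K}"] \<beta>
    by (simp add: summable_geometric suminf_geometric)
  then have "(\<Sum>k<K. \<bar>\<beta>\<bar> ^ k) * l2_norm y \<le> l2_norm y / (1 - \<bar>\<beta>\<bar>)"
    using mult_right_mono[OF _ l2_norm_nonneg] by fastforce
  with partial[of K] show ?thesis by (simp add: summand_def)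
qed

lemma l2_summable_geometric_shifts:
  fixes y :: "int \<Rightarrow> 'a::banach"
  assumes \<beta>: "\<bar>\<beta>\<bar> < 1" and y: "l2_summable y"
  shows "l2_summable (\<lambda>n. \<Sum>k. (\<beta> ^ k) *\<^sub>R y (n - d * int k))"
proof -
  define partial where "partial = (\<lambda>K n. \<Sum>k<K. (\<beta> ^ k) *\<^sub>R y (n - d * int k))"
  define B where "B = l2_norm y / (1 - \<bar>\<beta>\<bar>)"
  have "L2_set (\<lambda>n. norm (\<Sum>k. (\<beta> ^ k) *\<^sub>R y (n - d * int k))) F \<le> B" for F
  proof (rule LIMSEQ_le_const2)
    have "(\<lambda>K. partial K n) \<longlonglongrightarrow> (\<Sum>k. (\<beta> ^ k) *\<^sub>R y (n - d * int k))" for n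
      unfolding partial_def by (rule summable_LIMSEQ[OF summable_geometric_shifts[OF \<beta> y]])
    then show "(\<lambda>K. L2_set (\<lambda>n. norm (partial K n)) F)
        \<longlonglongrightarrow> L2_set (\<lambda>n. norm (\<Sum>k. (\<beta> ^ k) *\<^sub>R y (n - d * int k))) F"
      unfolding L2_set_def by (intro tendsto_intros)
    show "\<exists>N. \<forall>K\<ge>N. L2_set (\<lambda>n. norm (partial K n)) F \<le> B"
    proof (intro exI allI impI)
      fix K :: nat
      show "L2_set (\<lambda>n. norm (partial K n)) F \<le> B"
        using L2_set_le_l2_norm[of "partial K" F]
          l2_geometric_shifts_partial[OF \<beta> y, where K = K and d = d]
        by (simp add: partial_def B_def)
    qed
  qed
  then show ?thesis by (rule L2_set_bounded_imp_l2[THEN conjunct1])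
qed

lemma l2_solve_first_order:
  fixes y :: "int \<Rightarrow> 'a::banach"
  assumes \<beta>: "\<bar>\<beta>\<bar> < 1" and y: "l2_summable y"
  shows "\<exists>x. l2_summable x \<and> (\<forall>n. x n - \<beta> *\<^sub>R x (n - d) = y n)"
proof -
  define summand where "summand = (\<lambda>n k. (\<beta> ^ k) *\<^sub>R y (n - d * int k))"
  define x where "x = (\<lambda>n. \<Sum>k. summand n k)"
  have summable_summand: "summable (summand n)" for n
    unfolding summand_def by (rule summable_geometric_shifts[OF \<beta> y])
  have "x n - \<beta> *\<^sub>R x (n - d) = y n" for n
  proof -
    have "x n = summand n 0 + (\<Sum>k. summand n (Suc k))"
      unfolding x_def by (simp add: suminf_split_head[OF summable_summand])
    also have "(\<lambda>k. summand n (Suc k)) = (\<lambda>k. \<beta> *\<^sub>R summand (n - d) k)"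
      by (simp add: fun_eq_iff summand_def algebra_simps)
    also have "(\<Sum>k. \<beta> *\<^sub>R summand (n - d) k) = \<beta> *\<^sub>R x (n - d)"
      unfolding x_def by (rule suminf_scaleR_right[OF summable_summand, symmetric])
    finally show ?thesis by (simp add: summand_def)
  qed
  moreover have "l2_summable x"
    unfolding x_def summand_def by (rule l2_summable_geometric_shifts[OF \<beta> y])
  ultimately show ?thesis by blast
qed

lemma quadratic_root_in_unit_interval:
  fixes p q :: real
  assumes "2 * \<bar>q\<bar> < p"
  shows "\<exists>\<beta>. \<bar>\<beta>\<bar> < 1 \<and> q * \<beta>\<^sup>2 + p * \<beta> + q = 0"
proof -
  define w where "w = sqrt (p\<^sup>2 - 4 * q\<^sup>2)"
  have "0 < p" using assms by linarith
  have "4 * q\<^sup>2 < p\<^sup>2"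
    using power_strict_mono[of "2 * \<bar>q\<bar>" p 2] assms by (simp add: power_mult_distrib)
  then have "0 \<le> w" and w2: "w\<^sup>2 = p\<^sup>2 - 4 * q\<^sup>2" by (simp_all add: w_def)
  define \<beta> where "\<beta> = - 2 * q / (p + w)"
  have pw: "0 < p + w" using \<open>0 < p\<close> \<open>0 \<le> w\<close> by linarith
  have "\<bar>\<beta>\<bar> = 2 * \<bar>q\<bar> / (p + w)" using pw by (simp add: \<beta>_def abs_div abs_mult)
  also have "\<dots> \<le> 2 * \<bar>q\<bar> / p" using \<open>0 < p\<close> \<open>0 \<le> w\<close> by (simp add: frac_le)
  also have "\<dots> < 1" using assms \<open>0 < p\<close> by simp
  finally have "\<bar>\<beta>\<bar> < 1" .
  have \<beta>pw: "\<beta> * (p + w) = - 2 * q" using pw by (simp add: \<beta>_def)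
  have "(q * \<beta>\<^sup>2 + p * \<beta> + q) * (p + w)\<^sup>2
      = q * (\<beta> * (p + w))\<^sup>2 + p * (\<beta> * (p + w)) * (p + w) + q * (p + w)\<^sup>2"
    by (simp add: algebra_simps power2_eq_square)
  also have "\<dots> = q * (4 * q\<^sup>2 - p\<^sup>2 + w\<^sup>2)"
    unfolding \<beta>pw by (simp add: algebra_simps power2_eq_square)
  also have "\<dots> = 0" using w2 by simp
  finally have "q * \<beta>\<^sup>2 + p * \<beta> + q = 0" using pw by simp
  with \<open>\<bar>\<beta>\<bar> < 1\<close> show ?thesis by blast
qed

lemma l2_solve_second_order:
  fixes g :: "int \<Rightarrow> 'a::banach"
  assumes pq: "2 * \<bar>q\<bar> < p" and g: "l2_summable g"
  shows "\<exists>u. l2_summable u \<and> (\<forall>n. p *\<^sub>R u n + q *\<^sub>R (u (n - 1) + u (n + 1)) = g n)"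
proof -
  obtain \<beta> where \<beta>: "\<bar>\<beta>\<bar> < 1" and root: "q * \<beta>\<^sup>2 + p * \<beta> + q = 0"
    using quadratic_root_in_unit_interval[OF pq] by blast
  define \<alpha> where "\<alpha> = p / (1 + \<beta>\<^sup>2)"
  have "0 < 1 + \<beta>\<^sup>2" by (simp add: add_pos_nonneg)
  then have p: "\<alpha> * (1 + \<beta>\<^sup>2) = p" by (simp add: \<alpha>_def)
  have "- \<alpha> * \<beta> = - p * \<beta> / (1 + \<beta>\<^sup>2)" by (simp add: \<alpha>_def)
  also have "- p * \<beta> = q * (1 + \<beta>\<^sup>2)" using root by (simp add: algebra_simps)
  finally have q: "- \<alpha> * \<beta> = q" using \<open>0 < 1 + \<beta>\<^sup>2\<close> by simp
  have "0 < \<alpha>" using pq \<open>0 < 1 + \<beta>\<^sup>2\<close> by (simp add: \<alpha>_def)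
  have "l2_summable (\<lambda>n. (1 / \<alpha>) *\<^sub>R g n)"
    using l2_scaled[OF g, of "\<lambda>n. (1 / \<alpha>) *\<^sub>R g n" "1 / \<alpha>"] \<open>0 < \<alpha>\<close> by simp
  then obtain w where w: "l2_summable w" and w_eq: "\<And>n. w n - \<beta> *\<^sub>R w (n - 1) = (1 / \<alpha>) *\<^sub>R g n"
    using l2_solve_first_order[OF \<beta>] by blast
  obtain u where u: "l2_summable u" and u_eq: "\<And>n. u n - \<beta> *\<^sub>R u (n - (- 1)) = w n"
    using l2_solve_first_order[OF \<beta> w] by blast
  have "p *\<^sub>R u n + q *\<^sub>R (u (n - 1) + u (n + 1)) = g n" for n
  proof -
    have "g n = \<alpha> *\<^sub>R (w n - \<beta> *\<^sub>R w (n - 1))" using w_eq[of n] \<open>0 < \<alpha>\<close> by simp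
    also have "\<dots> = \<alpha> *\<^sub>R ((u n - \<beta> *\<^sub>R u (n + 1)) - \<beta> *\<^sub>R (u (n - 1) - \<beta> *\<^sub>R u n))"
      using u_eq[of n] u_eq[of "n - 1"] by simp
    also have "\<dots> = (\<alpha> * (1 + \<beta>\<^sup>2)) *\<^sub>R u n + (- \<alpha> * \<beta>) *\<^sub>R (u (n - 1) + u (n + 1))"
      by (simp add: algebra_simps power2_eq_square)
    finally show ?thesis unfolding p q by simp
  qed
  with u show ?thesis by blast
qed

section \<open>The bulk spectral gap\<close>

lemma of_real_vector_mult_eq_scaleR: "complex_of_real e *s v = e *\<^sub>R v"
  by (simp add: vec_eq_iff) (simp add: scaleR_conv_of_real)

lemma Hbulk_diff: "Hbulk A V (\<lambda>k. f k - g k) = (\<lambda>n. Hbulk A V f n - Hbulk A V g n)"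
  by (simp add: Hbulk_def fun_eq_iff algebra_simps)

lemma Hbulk_add: "Hbulk A V (\<lambda>k. f k + g k) = (\<lambda>n. Hbulk A V f n + Hbulk A V g n)"
  by (simp add: Hbulk_def fun_eq_iff algebra_simps)

lemma Hbulk_scale: "Hbulk A V (\<lambda>k. c *s f k) = (\<lambda>n. c *s Hbulk A V f n)"
  by (simp add: Hbulk_def fun_eq_iff vector_scalar_commute vector_add_ldistrib)

lemma l2_summable_matrix_vector_mult:
  fixes M :: "complex^2^2"
  assumes "l2_summable f"
  shows "l2_summable (\<lambda>n. M *v f n)"
proof -
  obtain K where "\<And>x. norm (M *v x) \<le> norm x * K"
    using bounded_linear.bounded[OF matrix_vector_mul_bounded_linear] by blast
  then show ?thesis by (intro l2_bounded_map[OF assms, where k=K]) (simp add: mult.commute)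
qed

lemma l2_summable_Hbulk:
  assumes "l2_summable f"
  shows "l2_summable (Hbulk A V f)"
proof -
  have "l2_summable (\<lambda>n. f (n - 1))" "l2_summable (\<lambda>n. f (n + 1))"
    using assms l2_shift[of f "- 1"] l2_shift[of f 1] by simp_all
  then have "l2_summable (\<lambda>n. adjM A *v f (n - 1))" "l2_summable (\<lambda>n. A *v f (n + 1))"
    "l2_summable (\<lambda>n. V *v f n)"
    using assms by (simp_all add: l2_summable_matrix_vector_mult)
  then show ?thesis unfolding Hbulk_def using l2_add by blast
qed

lemma Hbulk_ssh_nth:
  "Hbulk (ssh_A t) (ssh_V s) f n $ 1 = s *\<^sub>R f n $ 2 + t *\<^sub>R f (n - 1) $ 2"
  "Hbulk (ssh_A t) (ssh_V s) f n $ 2 = s *\<^sub>R f n $ 1 + t *\<^sub>R f (n + 1) $ 1"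
  by (simp_all add: Hbulk_def ssh_A_def ssh_V_def sigma1_def adjM_def matrix_vector_mult_def
      sum_2 scaleR_conv_of_real)

lemma Hbulk_ssh_square:
  "Hbulk (ssh_A t) (ssh_V s) (Hbulk (ssh_A t) (ssh_V s) f) n
     = (s\<^sup>2 + t\<^sup>2) *\<^sub>R f n + (s * t) *\<^sub>R (f (n - 1) + f (n + 1))"
  by (simp add: vec_eq_iff forall_2 Hbulk_ssh_nth algebra_simps power2_eq_square)

lemma l2_norm_shift_combination_ge:
  fixes x :: "int \<Rightarrow> 'a::real_normed_vector"
  assumes x: "l2_summable x"
  shows "\<bar>\<bar>s\<bar> - \<bar>t\<bar>\<bar> * l2_norm x \<le> l2_norm (\<lambda>n. s *\<^sub>R x n + t *\<^sub>R x (n + d))"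
proof -
  have scaled: "l2_summable (\<lambda>n. c *\<^sub>R x (n + k)) \<and> l2_norm (\<lambda>n. c *\<^sub>R x (n + k)) = \<bar>c\<bar> * l2_norm x"
    for c k
    using l2_scaled[of "\<lambda>n. x (n + k)" "\<lambda>n. c *\<^sub>R x (n + k)" "\<bar>c\<bar>"] x l2_shift[of x k] by simp
  define y where "y = (\<lambda>n. s *\<^sub>R x n + t *\<^sub>R x (n + d))"
  have y: "l2_summable y"
    using l2_add[OF conjunct1[OF scaled[of s 0]] conjunct1[OF scaled[of t d]]] by (simp add: y_def)
  have "\<bar>s\<bar> * l2_norm x \<le> l2_norm y + \<bar>t\<bar> * l2_norm x"
    using l2_add[OF y conjunct1[OF scaled[of "- t" d]]] scaled[of s 0] scaled[of "- t" d]
    by (simp add: y_def)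
  moreover have "\<bar>t\<bar> * l2_norm x \<le> l2_norm y + \<bar>s\<bar> * l2_norm x"
    using l2_add[OF y conjunct1[OF scaled[of "- s" 0]]] scaled[of t d] scaled[of "- s" 0]
    by (simp add: y_def)
  ultimately show ?thesis by (simp add: y_def abs_if left_diff_distrib)
qed

lemma l2_norm_Hbulk_ssh_ge:
  assumes f: "l2_summable f"
  shows "\<bar>\<bar>s\<bar> - \<bar>t\<bar>\<bar> * l2_norm f \<le> l2_norm (Hbulk (ssh_A t) (ssh_V s) f)"
proof -
  let ?m = "\<bar>\<bar>s\<bar> - \<bar>t\<bar>\<bar>" and ?Hf = "Hbulk (ssh_A t) (ssh_V s) f"
  have comps: "l2_summable (\<lambda>n. f n $ 1)" "l2_summable (\<lambda>n. f n $ 2)"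
    using f l2_summable_vec2_iff by blast+
  have Hf: "l2_summable ?Hf" using f by (rule l2_summable_Hbulk)
  have "?m * l2_norm (\<lambda>n. f n $ 2) \<le> l2_norm (\<lambda>n. ?Hf n $ 1)"
    using l2_norm_shift_combination_ge[OF comps(2), of s t "- 1"] by (simp add: Hbulk_ssh_nth)
  then have 1: "(?m * l2_norm (\<lambda>n. f n $ 2))\<^sup>2 \<le> (l2_norm (\<lambda>n. ?Hf n $ 1))\<^sup>2"
    by (simp add: power_mono l2_norm_nonneg)
  have "?m * l2_norm (\<lambda>n. f n $ 1) \<le> l2_norm (\<lambda>n. ?Hf n $ 2)"
    using l2_norm_shift_combination_ge[OF comps(1), of s t 1] by (simp add: Hbulk_ssh_nth)
  then have 2: "(?m * l2_norm (\<lambda>n. f n $ 1))\<^sup>2 \<le> (l2_norm (\<lambda>n. ?Hf n $ 2))\<^sup>2"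
    by (simp add: power_mono l2_norm_nonneg)
  have "(?m * l2_norm f)\<^sup>2 \<le> (l2_norm ?Hf)\<^sup>2"
    using add_mono[OF 1 2]
    by (simp add: power_mult_distrib distrib_left l2_norm_vec2[OF f] l2_norm_vec2[OF Hf] add_ac)
  then show ?thesis by (rule power2_le_imp_le) (rule l2_norm_nonneg)
qed

lemma in_resolvent_l2I:
  fixes T :: "(int \<Rightarrow> complex^2) \<Rightarrow> (int \<Rightarrow> complex^2)" and lam :: complex
  defines "R \<equiv> \<lambda>f n. T f n - lam *s f n"
  assumes diff: "\<And>f g. T (\<lambda>k. f k - g k) = (\<lambda>n. T f n - T g n)"
    and maps: "\<And>f. l2_summable f \<Longrightarrow> l2_summable (R f)"
    and onto: "\<And>g. l2_summable g \<Longrightarrow> \<exists>f. l2_summable f \<and> R f = g"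
    and "0 < c" and below: "\<And>f. l2_summable f \<Longrightarrow> c * l2_norm f \<le> l2_norm (R f)"
  shows "in_resolvent_l2 T lam"
proof -
  have "inj_on R l2Z"
  proof (rule inj_onI)
    fix f g assume "f \<in> l2Z" "g \<in> l2Z" and eq: "R f = R g"
    define h where "h = (\<lambda>n. f n - g n)"
    have "l2_summable (\<lambda>n. - g n)"
      using \<open>g \<in> l2Z\<close> l2_scaled[of g "\<lambda>n. - g n" 1] by (simp add: l2Z_eq)
    then have h: "l2_summable h"
      using \<open>f \<in> l2Z\<close> l2_add[of f "\<lambda>n. - g n"] by (simp add: h_def l2Z_eq)
    have "R h = (\<lambda>n. 0)"
      using eq by (simp add: R_def h_def diff fun_eq_iff vector_ssub_ldistrib algebra_simps)
    then have "c * l2_norm h \<le> 0" using below[OF h] by (simp add: l2_zero)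
    then have "l2_norm h \<le> 0" using \<open>0 < c\<close> by (simp add: mult_le_0_iff l2_norm_nonneg)
    then show "f = g" using l2_norm_le_0_imp_zero[OF h] by (simp add: h_def fun_eq_iff)
  qed
  moreover have "R ` l2Z = l2Z"
    using maps onto by (fastforce simp: l2Z_eq)
  moreover have "l2norm f \<le> (1 / c) * l2norm (R f)" if "f \<in> l2Z" for f
    using below[of f] that \<open>0 < c\<close> by (simp add: l2Z_eq l2norm_eq_l2_norm field_simps)
  ultimately show ?thesis
    unfolding in_resolvent_l2_def bij_betw_def R_def by blast
qed

lemma l2_summable_Hbulk_shifted:
  assumes "l2_summable f"
  shows "l2_summable (\<lambda>n. Hbulk A V f n - e *\<^sub>R f n)"
  using l2_add[OF l2_summable_Hbulk[OF assms] conjunct1[OF l2_scaleR[OF assms, of "- e"]]] by simp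

lemma l2_norm_Hbulk_ssh_shifted_ge:
  assumes f: "l2_summable f"
  shows "(\<bar>\<bar>s\<bar> - \<bar>t\<bar>\<bar> - \<bar>e\<bar>) * l2_norm f \<le> l2_norm (\<lambda>n. Hbulk (ssh_A t) (ssh_V s) f n - e *\<^sub>R f n)"
proof -
  let ?H = "Hbulk (ssh_A t) (ssh_V s)"
  have "l2_norm (?H f) \<le> l2_norm (\<lambda>n. ?H f n - e *\<^sub>R f n) + \<bar>e\<bar> * l2_norm f"
    using l2_add[OF l2_summable_Hbulk_shifted[OF f, of "ssh_A t" "ssh_V s" e]
        conjunct1[OF l2_scaleR[OF f, of e]]]
      l2_scaleR[OF f, of e] by simp
  moreover have "\<bar>\<bar>s\<bar> - \<bar>t\<bar>\<bar> * l2_norm f \<le> l2_norm (?H f)"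
    by (rule l2_norm_Hbulk_ssh_ge[OF f])
  ultimately show ?thesis by (simp add: left_diff_distrib)
qed

lemma Hbulk_ssh_shifted_surj:
  assumes e: "\<bar>e\<bar> < \<bar>\<bar>s\<bar> - \<bar>t\<bar>\<bar>" and g: "l2_summable g"
  shows "\<exists>f. l2_summable f \<and> (\<lambda>n. Hbulk (ssh_A t) (ssh_V s) f n - e *\<^sub>R f n) = g"
proof -
  let ?H = "Hbulk (ssh_A t) (ssh_V s)"
  have "e\<^sup>2 < (\<bar>s\<bar> - \<bar>t\<bar>)\<^sup>2"
    using power_strict_mono[OF e, of 2] by simp
  then have "2 * \<bar>s * t\<bar> < s\<^sup>2 + t\<^sup>2 - e\<^sup>2" by (simp add: power2_diff abs_mult)
  then obtain w where w: "l2_summable w"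
    and w_eq: "\<And>n. (s\<^sup>2 + t\<^sup>2 - e\<^sup>2) *\<^sub>R w n + (s * t) *\<^sub>R (w (n - 1) + w (n + 1)) = g n"
    using l2_solve_second_order[OF _ g] by blast
  \<comment> \<open>\<open>(H - e) (H + e) = H\<^sup>2 - e\<^sup>2\<close>\<close>
  define f where "f = (\<lambda>n. ?H w n + e *\<^sub>R w n)"
  have "l2_summable f"
    using l2_add[OF l2_summable_Hbulk[OF w] conjunct1[OF l2_scaleR[OF w, of e]]]
    by (simp add: f_def)
  moreover have "(\<lambda>n. ?H f n - e *\<^sub>R f n) = g"
  proof -
    have "f = (\<lambda>n. ?H w n + complex_of_real e *s w n)"
      by (simp add: f_def of_real_vector_mult_eq_scaleR)
    then have "?H f = (\<lambda>n. ?H (?H w) n + complex_of_real e *s ?H w n)"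
      by (simp add: Hbulk_add Hbulk_scale)
    then show ?thesis
      by (simp add: f_def fun_eq_iff Hbulk_ssh_square w_eq[symmetric] algebra_simps
          power2_eq_square of_real_vector_mult_eq_scaleR)
  qed
  ultimately show ?thesis by blast
qed

lemma bulk_gap_ssh:
  assumes "\<bar>s\<bar> \<noteq> \<bar>t\<bar>"
  shows "bulk_gap (ssh_A t) (ssh_V s)"
  unfolding bulk_gap_def
proof (intro exI conjI allI impI)
  show "0 < \<bar>\<bar>s\<bar> - \<bar>t\<bar>\<bar>" using assms by simp
  fix e :: real
  assume e: "\<bar>e\<bar> < \<bar>\<bar>s\<bar> - \<bar>t\<bar>\<bar>"
  let ?H = "Hbulk (ssh_A t) (ssh_V s)"
  have maps: "l2_summable (\<lambda>n. ?H f n - complex_of_real e *s f n)" if "l2_summable f" for f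
    using that unfolding of_real_vector_mult_eq_scaleR by (rule l2_summable_Hbulk_shifted)
  have onto: "\<exists>f. l2_summable f \<and> (\<lambda>n. ?H f n - complex_of_real e *s f n) = g"
    if "l2_summable g" for g
    using that unfolding of_real_vector_mult_eq_scaleR by (rule Hbulk_ssh_shifted_surj[OF e])
  have below:
    "(\<bar>\<bar>s\<bar> - \<bar>t\<bar>\<bar> - \<bar>e\<bar>) * l2_norm f \<le> l2_norm (\<lambda>n. ?H f n - complex_of_real e *s f n)"
    if "l2_summable f" for f
    using that unfolding of_real_vector_mult_eq_scaleR by (rule l2_norm_Hbulk_ssh_shifted_ge)
  have "0 < \<bar>\<bar>s\<bar> - \<bar>t\<bar>\<bar> - \<bar>e\<bar>" using e by simp
  from in_resolvent_l2I[OF Hbulk_diff maps onto this below]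
  show "complex_of_real e \<notin> spectrum_l2 ?H"
    by (simp add: spectrum_l2_def)
qed

definition geom_tail :: "real \<Rightarrow> int \<Rightarrow> complex" where
  "geom_tail r n = (if n \<ge> 1 then complex_of_real (r ^ nat (n - 1)) else 0)"

lemma geom_tail_1 [simp]: "geom_tail r 1 = 1"
  by (simp add: geom_tail_def)

lemma geom_tail_nonpos [simp]: "n \<le> 0 \<Longrightarrow> geom_tail r n = 0"
  by (simp add: geom_tail_def)

lemma geom_tail_succ: "n \<ge> 1 \<Longrightarrow> geom_tail r (n + 1) = r * geom_tail r n"
  by (simp add: geom_tail_def nat_diff_distrib' Suc_nat_eq_nat_zadd1 flip: power_Suc)

lemma l2_summable_geom_tail:
  assumes "\<bar>r\<bar> < 1"
  shows "l2_summable (geom_tail r)"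
proof -
  have "(\<lambda>k. (r\<^sup>2) ^ k) summable_on UNIV"
    using assms by (simp add: summable_on_UNIV_nonneg_real_iff abs_square_less_1 summable_geometric)
  moreover have "(\<lambda>k. (r\<^sup>2) ^ k) = (\<lambda>n. (cmod (geom_tail r n))\<^sup>2) \<circ> (\<lambda>k::nat. int k + 1)"
  proof
    fix k :: nat
    have "(cmod (complex_of_real (r ^ k)))\<^sup>2 = (r\<^sup>2) ^ k"
      by (metis norm_of_real power2_abs mult.commute power_mult)
    then show "(r\<^sup>2) ^ k = ((\<lambda>n. (cmod (geom_tail r n))\<^sup>2) \<circ> (\<lambda>k::nat. int k + 1)) k"
      by (simp add: geom_tail_def)
  qed
  ultimately have "(\<lambda>n. (cmod (geom_tail r n))\<^sup>2) summable_on range (\<lambda>k::nat. int k + 1)"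
    by (simp add: summable_on_reindex inj_on_def o_def)
  moreover have "range (\<lambda>k::nat. int k + 1) = {1..}"
    by (auto simp: image_iff) presburger
  ultimately show ?thesis
    unfolding l2_summable_def by (subst summable_on_cong_neutral[where T = "{1..}"]) auto
qed

lemma bounded_geometric_recursion_vanishes:
  fixes z :: "int \<Rightarrow> 'a::real_normed_vector"
  assumes r: "\<bar>r\<bar> < 1" and bounded: "\<And>n. norm (z n) \<le> B"
    and rec: "\<And>n. n \<ge> n0 \<Longrightarrow> z n = r *\<^sub>R z (n + 1)" and "n \<ge> n0"
  shows "z n = 0"
proof -
  have iterate: "z n = (r ^ k) *\<^sub>R z (n + int k)" for k
  proof (induction k)
    case (Suc k)
    have "z (n + int k) = r *\<^sub>R z (n + int k + 1)" using rec[of "n + int k"] \<open>n \<ge> n0\<close> by simp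
    with Suc show ?case by (simp add: ac_simps)
  qed simp
  have "norm (z n) \<le> \<bar>r\<bar> ^ k * B" for k
    using iterate[of k] mult_left_mono[OF bounded, of "\<bar>r\<bar> ^ k" "n + int k"]
    by (simp add: power_abs)
  moreover have "(\<lambda>k. \<bar>r\<bar> ^ k * B) \<longlonglongrightarrow> 0"
    using r by (simp add: LIMSEQ_power_zero tendsto_mult_left_zero)
  ultimately have "norm (z n) \<le> 0"
    by (intro LIMSEQ_le_const[of "\<lambda>k. \<bar>r\<bar> ^ k * B"]) auto
  then show ?thesis by simp
qed

lemma half_line_geometric:
  fixes z :: "int \<Rightarrow> complex" and s t :: real
  assumes "t \<noteq> 0" and rec: "\<And>n. n \<ge> 1 \<Longrightarrow> s * z n + t * z (n + 1) = 0" and "n \<ge> 1"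
  shows "z n = z 1 * geom_tail (- s / t) n"
  using \<open>n \<ge> 1\<close>
proof (induction n rule: int_ge_induct)
  case (step n)
  have "z (n + 1) = (- s / t) * z n"
    using rec[OF step(1)] \<open>t \<noteq> 0\<close> by (simp add: field_simps eq_neg_iff_add_eq_0)
  then show ?case using step by (simp add: geom_tail_succ)
qed simp

lemma half_line_vanishes:
  fixes z :: "int \<Rightarrow> complex" and s t :: real
  assumes "\<bar>t\<bar> < \<bar>s\<bar>" and "\<And>n. cmod (z n) \<le> B"
    and rec: "\<And>n. n \<ge> 1 \<Longrightarrow> s * z n + t * z (n + 1) = 0" and "n \<ge> 1"
  shows "z n = 0"
proof (rule bounded_geometric_recursion_vanishes[where r = "- t / s"])
  show "\<bar>- t / s\<bar> < 1" using assms(1) by (simp add: abs_div divide_less_eq)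
  show "z n = (- t / s) *\<^sub>R z (n + 1)" if "n \<ge> 1" for n
    using rec[OF that] assms(1) by (auto simp: scaleR_conv_of_real field_simps eq_neg_iff_add_eq_0)
qed (use assms in auto)

lemma geom_tail_solves_half_line:
  fixes s t r :: real
  assumes "s + t * r = 0" and "n \<ge> 1"
  shows "s * (k * geom_tail r n) + t * (k * geom_tail r (n + 1)) = 0"
    and "s * (k * geom_tail r n) + t * (k * geom_tail r (1 + n)) = 0"
    \<comment> \<open>the second form is what the simplifier makes of \<open>- (- n - 1)\<close>\<close>
proof -
  have "s * (k * geom_tail r n) + t * (k * geom_tail r (n + 1)) = k * geom_tail r n * (s + t * r)"
    unfolding geom_tail_succ[OF \<open>n \<ge> 1\<close>] by (simp add: algebra_simps)
  also have "\<dots> = 0" using assms(1) by (metis mult_eq_0_iff of_real_0 of_real_add of_real_mult)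
  finally show "s * (k * geom_tail r n) + t * (k * geom_tail r (n + 1)) = 0" .
  then show "s * (k * geom_tail r n) + t * (k * geom_tail r (1 + n)) = 0" by (simp add: add.commute)
qed

section \<open>The kernel of the SSH interface Hamiltonian\<close>

interpretation istate: vector_space scaleI
  by unfold_locales (auto simp: scaleI_def prod_eq_iff fun_eq_iff vec_eq_iff algebra_simps)

lemma H_SSH_nth:
  "fst (H_SSH s t uL uR (f, c)) n $ 1 =
    (if n = 0 then 0 else if n = 1 then uR * c + s * f 1 $ 2
     else s * f n $ 2 + t * f (n - 1) $ 2)"
  "fst (H_SSH s t uL uR (f, c)) n $ 2 =
    (if n = 0 then 0 else if n = -1 then uL * c + s * f (-1) $ 1
     else s * f n $ 1 + t * f (n + 1) $ 1)"
  "snd (H_SSH s t uL uR (f, c)) = uL * f (-1) $ 2 + uR * f 1 $ 1"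
  by (auto simp: H_SSH_def Hint_def ssh_A_def ssh_V_def sigma1_def adjM_def matrix_vector_mult_def
      sum_2 colmul_def rowmul_def algebra_simps)

lemma mem_kerI_H_SSH_I:
  assumes "f 0 = 0" and "l2_summable f"
    and "\<And>n. n \<ge> 1 \<Longrightarrow> s * f n $ 1 + t * f (n + 1) $ 1 = 0"
    and "\<And>n. n \<ge> 1 \<Longrightarrow> s * f (- n) $ 2 + t * f (- (n + 1)) $ 2 = 0"
    and "\<And>n. n \<ge> 1 \<Longrightarrow> t * f n $ 2 + s * f (n + 1) $ 2 = 0"
    and "\<And>n. n \<ge> 1 \<Longrightarrow> t * f (- n) $ 1 + s * f (- (n + 1)) $ 1 = 0"
    and "uR * c + s * f 1 $ 2 = 0" and "uL * c + s * f (- 1) $ 1 = 0"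
    and "uL * f (- 1) $ 2 + uR * f 1 $ 1 = 0"
  shows "(f, c) \<in> kerI (H_SSH s t uL uR)"
proof -
  have "fst (H_SSH s t uL uR (f, c)) n $ 1 = 0 \<and> fst (H_SSH s t uL uR (f, c)) n $ 2 = 0" for n
  proof -
    consider "n = 0" | "n = 1" | "n = -1" | "n \<ge> 2" | "n \<le> -2" by linarith
    then show ?thesis
      using assms(3)[of n] assms(4)[of "- n"] assms(5)[of "n - 1"] assms(6)[of "- n - 1"] assms(7,8)
      by cases (simp_all add: H_SSH_nth algebra_simps)
  qed
  then show ?thesis
    using assms(1,2,9)
    by (simp add: kerI_def intSpace_def sq_summable_def l2_summable_def prod_eq_iff fun_eq_iff
        vec_eq_iff forall_2 H_SSH_nth(3))
qed

lemma mem_kerI_H_SSH_D: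
  assumes "(f, c) \<in> kerI (H_SSH s t uL uR)"
  shows "f 0 = 0" and "l2_summable f"
    and "\<And>n. n \<ge> 1 \<Longrightarrow> s * f n $ 1 + t * f (n + 1) $ 1 = 0"
    and "\<And>n. n \<ge> 1 \<Longrightarrow> s * f (- n) $ 2 + t * f (- (n + 1)) $ 2 = 0"
    and "\<And>n. n \<ge> 1 \<Longrightarrow> t * f n $ 2 + s * f (n + 1) $ 2 = 0"
    and "\<And>n. n \<ge> 1 \<Longrightarrow> t * f (- n) $ 1 + s * f (- (n + 1)) $ 1 = 0"
    and "uR * c + s * f 1 $ 2 = 0" and "uL * c + s * f (- 1) $ 1 = 0"
    and "uL * f (- 1) $ 2 + uR * f 1 $ 1 = 0"
proof -
  have H: "H_SSH s t uL uR (f, c) = ((\<lambda>_. 0), 0)" and "f 0 = 0" "l2_summable f"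
    using assms by (simp_all add: kerI_def intSpace_def sq_summable_def l2_summable_def)
  then have e1: "fst (H_SSH s t uL uR (f, c)) n $ 1 = 0"
    and e2: "fst (H_SSH s t uL uR (f, c)) n $ 2 = 0"
    and e0: "snd (H_SSH s t uL uR (f, c)) = 0" for n
    by simp_all
  show "f 0 = 0" and "l2_summable f" by fact+
  show "s * f n $ 1 + t * f (n + 1) $ 1 = 0" if "n \<ge> 1" for n
    using e2[of n] that by (simp add: H_SSH_nth)
  show "s * f (- n) $ 2 + t * f (- (n + 1)) $ 2 = 0" if "n \<ge> 1" for n
    using e1[of "- n"] that by (simp add: H_SSH_nth)
  show "t * f n $ 2 + s * f (n + 1) $ 2 = 0" if "n \<ge> 1" for n
    using e1[of "n + 1"] that by (simp add: H_SSH_nth add.commute)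
  show "t * f (- n) $ 1 + s * f (- (n + 1)) $ 1 = 0" if "n \<ge> 1" for n
    using e2[of "- n - 1"] that by (simp add: H_SSH_nth) (simp add: add.commute)
  show "uR * c + s * f 1 $ 2 = 0" and "uL * c + s * f (- 1) $ 1 = 0"
    and "uL * f (- 1) $ 2 + uR * f 1 $ 1 = 0"
    using e1[of 1] e2[of "- 1"] e0 by (simp_all add: H_SSH_nth)
qed

lemma fun_eq_by_half_lines:
  fixes f g :: "int \<Rightarrow> 'a"
  assumes "\<And>n. n \<ge> 1 \<Longrightarrow> f n = g n" and "\<And>n. n \<ge> 1 \<Longrightarrow> f (- n) = g (- n)" and "f 0 = g 0"
  shows "f = g"
proof
  fix n
  show "f n = g n"
    using assms(1)[of n] assms(2)[of "- n"] assms(3) by (cases "n \<ge> 1"; cases "n = 0") auto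
qed

text \<open>
  Sublattice A consists of the first components on the right half-line and the second components
  on the left one; sublattice B of the remaining components and the central site, which couples
  only to A. \<open>A_mode\<close> carries geometric tails on A, \<open>B_mode\<close> on B.
\<close>

definition A_mode :: "real \<Rightarrow> complex \<Rightarrow> complex \<Rightarrow> complex \<Rightarrow> istate" where
  "A_mode r a b c = ((\<lambda>n. vector [a * geom_tail r n, b * geom_tail r (- n)]), c)"

definition B_mode :: "real \<Rightarrow> complex \<Rightarrow> complex \<Rightarrow> complex \<Rightarrow> istate" where
  "B_mode r a b c = ((\<lambda>n. vector [b * geom_tail r (- n), a * geom_tail r n]), c)"

lemma l2_summable_two_sided_geom_tail:
  assumes "\<bar>r\<bar> < 1"
  shows "l2_summable (\<lambda>n. vector [a * geom_tail r n, b * geom_tail r (- n)] :: complex^2)"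
    and "l2_summable (\<lambda>n. vector [b * geom_tail r (- n), a * geom_tail r n] :: complex^2)"
proof -
  have "l2_summable (\<lambda>n. k * geom_tail r n)" "l2_summable (\<lambda>n. k * geom_tail r (- n))" for k
    using l2_scaled[OF l2_summable_geom_tail[OF assms], of "\<lambda>n. k * geom_tail r n" "cmod k"]
      l2_reindex(1)[OF bij_uminus_int, of "\<lambda>n. k * geom_tail r n"] by (simp_all add: norm_mult)
  then show "l2_summable (\<lambda>n. vector [a * geom_tail r n, b * geom_tail r (- n)] :: complex^2)"
    and "l2_summable (\<lambda>n. vector [b * geom_tail r (- n), a * geom_tail r n] :: complex^2)"
    by (simp_all add: l2_summable_vec2_iff)
qed

lemma A_mode_mem_kerI:
  fixes a b c :: complex
  assumes "s + t * r = 0" and "\<bar>r\<bar> < 1"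
    and "uR * c = 0" and "uL * c = 0" and "uL * b + uR * a = 0"
  shows "A_mode r a b c \<in> kerI (H_SSH s t uL uR)"
  unfolding A_mode_def
  by (rule mem_kerI_H_SSH_I)
    (simp_all add: assms(3-5) l2_summable_two_sided_geom_tail(1)[OF assms(2)]
      geom_tail_solves_half_line[OF assms(1)] vec_eq_iff forall_2)

lemma B_mode_mem_kerI:
  fixes a b c :: complex
  assumes "t + s * r = 0" and "\<bar>r\<bar> < 1"
    and "uR * c + s * a = 0" and "uL * c + s * b = 0"
  shows "B_mode r a b c \<in> kerI (H_SSH s t uL uR)"
  unfolding B_mode_def
  by (rule mem_kerI_H_SSH_I)
    (simp_all add: assms(3-4) l2_summable_two_sided_geom_tail(2)[OF assms(2)]
      geom_tail_solves_half_line[where s = t and t = s, OF assms(1)] vec_eq_iff forall_2)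

lemma mem_kerI_H_SSH_imp_B_mode:
  assumes st: "\<bar>t\<bar> < \<bar>s\<bar>" and x: "(f, c) \<in> kerI (H_SSH s t uL uR)"
  shows "(f, c) = scaleI c (B_mode (- t / s) (- uR / s) (- uL / s) 1)"
proof -
  have "s \<noteq> 0" using st by auto
  note eqs = mem_kerI_H_SSH_D[OF x]
  note bounded = norm_nth_le_l2_norm[OF eqs(2)]
  have on_A: "f n $ 1 = 0" "f (- n) $ 2 = 0" if "n \<ge> 1" for n
    using half_line_vanishes[where z = "\<lambda>n. f n $ 1", OF st bounded eqs(3) that]
      half_line_vanishes[where z = "\<lambda>n. f (- n) $ 2", OF st bounded eqs(4) that] by simp_all
  have on_B: "f n $ 2 = f 1 $ 2 * geom_tail (- t / s) n"
    "f (- n) $ 1 = f (- 1) $ 1 * geom_tail (- t / s) n" if "n \<ge> 1" for n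
    using half_line_geometric[where z = "\<lambda>n. f n $ 2" and s = t and t = s,
        OF \<open>s \<noteq> 0\<close> eqs(5) that]
      half_line_geometric[where z = "\<lambda>n. f (- n) $ 1" and s = t and t = s,
        OF \<open>s \<noteq> 0\<close> eqs(6) that]
    by simp_all
  have start: "f 1 $ 2 = - uR / s * c" "f (- 1) $ 1 = - uL / s * c"
    using eqs(7,8) \<open>s \<noteq> 0\<close> by (simp_all add: field_simps eq_neg_iff_add_eq_0)
  have "f = fst (scaleI c (B_mode (- t / s) (- uR / s) (- uL / s) 1))"
  proof (rule fun_eq_by_half_lines)
    fix n :: int
    assume "n \<ge> 1"
    with on_A[OF this] on_B[OF this] start
    show "f n = fst (scaleI c (B_mode (- t / s) (- uR / s) (- uL / s) 1)) n"
      and "f (- n) = fst (scaleI c (B_mode (- t / s) (- uR / s) (- uL / s) 1)) (- n)"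
      by (simp_all add: B_mode_def scaleI_def vec_eq_iff forall_2)
  qed (use eqs(1) in \<open>simp add: B_mode_def scaleI_def vec_eq_iff forall_2\<close>)
  then show ?thesis by (simp add: prod_eq_iff B_mode_def scaleI_def)
qed

lemma mem_kerI_H_SSH_imp_A_mode:
  assumes st: "\<bar>s\<bar> < \<bar>t\<bar>" and x: "(f, c) \<in> kerI (H_SSH s t uL uR)"
  shows "(f, c) = A_mode (- s / t) (f 1 $ 1) (f (- 1) $ 2) c"
    and "uR * c = 0" and "uL * c = 0" and "uL * f (- 1) $ 2 + uR * f 1 $ 1 = 0"
proof -
  have "t \<noteq> 0" using st by auto
  note eqs = mem_kerI_H_SSH_D[OF x]
  note bounded = norm_nth_le_l2_norm[OF eqs(2)]
  have on_B: "f n $ 2 = 0" "f (- n) $ 1 = 0" if "n \<ge> 1" for n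
    using half_line_vanishes[where z = "\<lambda>n. f n $ 2" and s = t and t = s, OF st bounded eqs(5) that]
      half_line_vanishes[where z = "\<lambda>n. f (- n) $ 1" and s = t and t = s, OF st bounded eqs(6) that]
    by simp_all
  have on_A: "f n $ 1 = f 1 $ 1 * geom_tail (- s / t) n"
    "f (- n) $ 2 = f (- 1) $ 2 * geom_tail (- s / t) n" if "n \<ge> 1" for n
    using half_line_geometric[where z = "\<lambda>n. f n $ 1", OF \<open>t \<noteq> 0\<close> eqs(3) that]
      half_line_geometric[where z = "\<lambda>n. f (- n) $ 2", OF \<open>t \<noteq> 0\<close> eqs(4) that]
    by simp_all
  have "f = fst (A_mode (- s / t) (f 1 $ 1) (f (- 1) $ 2) c)"
  proof (rule fun_eq_by_half_lines)
    fix n :: int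
    assume "n \<ge> 1"
    with on_A[OF this] on_B[OF this]
    show "f n = fst (A_mode (- s / t) (f 1 $ 1) (f (- 1) $ 2) c) n"
      and "f (- n) = fst (A_mode (- s / t) (f 1 $ 1) (f (- 1) $ 2) c) (- n)"
      by (simp_all add: A_mode_def vec_eq_iff forall_2)
  qed (use eqs(1) in \<open>simp add: A_mode_def vec_eq_iff forall_2\<close>)
  then show "(f, c) = A_mode (- s / t) (f 1 $ 1) (f (- 1) $ 2) c"
    by (simp add: prod_eq_iff A_mode_def)
  show "uR * c = 0" "uL * c = 0" "uL * f (- 1) $ 2 + uR * f 1 $ 1 = 0"
    using eqs(7-9) on_B[of 1] by simp_all
qed

lemma A_mode_eq_iff: "A_mode r a b c = A_mode r a' b' c' \<longleftrightarrow> a = a' \<and> b = b' \<and> c = c'"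
proof
  assume eq: "A_mode r a b c = A_mode r a' b' c'"
  have "fst (A_mode r a b c) 1 $ 1 = fst (A_mode r a' b' c') 1 $ 1"
    "fst (A_mode r a b c) (- 1) $ 2 = fst (A_mode r a' b' c') (- 1) $ 2"
    "snd (A_mode r a b c) = snd (A_mode r a' b' c')"
    using eq by simp_all
  then show "a = a' \<and> b = b' \<and> c = c'" by (simp add: A_mode_def)
qed simp

lemma A_mode_0: "A_mode r 0 0 0 = 0"
  by (simp add: A_mode_def zero_prod_def zero_fun_def fun_eq_iff vec_eq_iff forall_2)

lemma A_mode_linear:
  "A_mode r a b c =
    scaleI a (A_mode r 1 0 0) + scaleI b (A_mode r 0 1 0) + scaleI c (A_mode r 0 0 1)"
  by (simp add: A_mode_def scaleI_def fun_eq_iff vec_eq_iff forall_2)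

lemma independent_A_mode_basis:
  "istate.independent {A_mode r 1 0 0, A_mode r 0 1 0, A_mode r 0 0 1}" (is "istate.independent ?B")
proof (rule istate.independent_if_scalars_zero)
  fix g x
  assume sum: "(\<Sum>y\<in>?B. scaleI (g y) y) = 0" and "x \<in> ?B"
  have "(\<Sum>y\<in>?B. scaleI (g y) y)
      = A_mode r (g (A_mode r 1 0 0)) (g (A_mode r 0 1 0)) (g (A_mode r 0 0 1))"
    by (simp add: A_mode_eq_iff A_mode_linear[of r "g _"] add.assoc)
  with sum have "A_mode r (g (A_mode r 1 0 0)) (g (A_mode r 0 1 0)) (g (A_mode r 0 0 1))
      = A_mode r 0 0 0"
    by (simp add: A_mode_0)
  then show "g x = 0"
    using \<open>x \<in> ?B\<close> unfolding A_mode_eq_iff by auto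
qed simp

lemma cdimI_kerI_H_SSH_if_t_less_s:
  assumes st: "\<bar>t\<bar> < \<bar>s\<bar>"
  shows "cdimI (kerI (H_SSH s t uL uR)) = 1"
proof -
  let ?\<phi> = "B_mode (- t / s) (- uR / s) (- uL / s) 1"
  have "s \<noteq> 0" and r: "\<bar>- t / s\<bar> < 1" using st by (auto simp: abs_div divide_less_eq)
  have "istate.dim (kerI (H_SSH s t uL uR)) = 1"
  proof (rule istate.dim_unique[of "{?\<phi>}"])
    have "?\<phi> \<in> kerI (H_SSH s t uL uR)"
      by (rule B_mode_mem_kerI[OF _ r]) (use \<open>s \<noteq> 0\<close> in simp_all)
    then show "{?\<phi>} \<subseteq> kerI (H_SSH s t uL uR)" by simp
    show "kerI (H_SSH s t uL uR) \<subseteq> istate.span {?\<phi>}"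
      using mem_kerI_H_SSH_imp_B_mode[OF st] by (force simp: istate.span_singleton)
    show "istate.independent {?\<phi>}" by (simp add: B_mode_def zero_prod_def)
  qed simp
  then show ?thesis by (simp add: cdimI_def)
qed

lemma cdimI_kerI_H_SSH_if_s_less_t_decoupled:
  assumes st: "\<bar>s\<bar> < \<bar>t\<bar>"
  shows "cdimI (kerI (H_SSH s t 0 0)) = 3"
proof -
  let ?r = "- s / t"
  let ?B = "{A_mode ?r 1 0 0, A_mode ?r 0 1 0, A_mode ?r 0 0 1}"
  have "t \<noteq> 0" and r: "\<bar>?r\<bar> < 1" using st by (auto simp: abs_div divide_less_eq)
  then have sr: "s + t * ?r = 0" by simp
  have "istate.dim (kerI (H_SSH s t 0 0)) = 3"
  proof (rule istate.dim_unique[of ?B])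
    show "?B \<subseteq> kerI (H_SSH s t 0 0)"
      using A_mode_mem_kerI[OF sr r] by simp
    show "kerI (H_SSH s t 0 0) \<subseteq> istate.span ?B"
    proof
      fix x assume "x \<in> kerI (H_SSH s t 0 0)"
      then obtain a b c where "x = A_mode ?r a b c"
        using mem_kerI_H_SSH_imp_A_mode(1)[OF st] by (metis prod.collapse)
      then show "x \<in> istate.span ?B"
        by (simp only: A_mode_linear[of ?r a])
          (intro istate.span_add istate.span_scale istate.span_base; simp)
    qed
    show "istate.independent ?B" by (rule independent_A_mode_basis)
    show "card ?B = 3" by (simp add: A_mode_eq_iff)
  qed
  then show ?thesis by (simp add: cdimI_def)
qed

lemma cdimI_kerI_H_SSH_if_s_less_t_coupled:
  assumes st: "\<bar>s\<bar> < \<bar>t\<bar>" and u: "uL \<noteq> 0 \<or> uR \<noteq> 0"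
  shows "cdimI (kerI (H_SSH s t uL uR)) = 1"
proof -
  let ?r = "- s / t"
  let ?\<phi> = "A_mode ?r uL (- uR) 0"
  have "t \<noteq> 0" and r: "\<bar>?r\<bar> < 1" using st by (auto simp: abs_div divide_less_eq)
  then have sr: "s + t * ?r = 0" by simp
  have "istate.dim (kerI (H_SSH s t uL uR)) = 1"
  proof (rule istate.dim_unique[of "{?\<phi>}"])
    show "{?\<phi>} \<subseteq> kerI (H_SSH s t uL uR)"
      using A_mode_mem_kerI[OF sr r] by simp
    show "kerI (H_SSH s t uL uR) \<subseteq> istate.span {?\<phi>}"
    proof clarify
      fix f c assume x: "(f, c) \<in> kerI (H_SSH s t uL uR)"
      note repr = mem_kerI_H_SSH_imp_A_mode[OF st x]
      let ?a = "f 1 $ 1" and ?b = "f (- 1) $ 2"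
      have "c = 0" using repr(2,3) u by auto
      obtain k :: complex where "?a = k * uL" "?b = k * (- uR)"
      proof (cases "uL = 0")
        case True
        with u repr(4) show ?thesis
          by (intro that[of "- ?b / complex_of_real uR"]) (auto simp: field_simps)
      next
        case False
        with repr(4) show ?thesis
          by (intro that[of "?a / complex_of_real uL"]) (auto simp: field_simps add_eq_0_iff)
      qed
      with \<open>c = 0\<close> have "(f, c) = scaleI k ?\<phi>"
        by (subst repr(1)) (simp add: A_mode_def scaleI_def fun_eq_iff vec_eq_iff forall_2)
      then show "(f, c) \<in> istate.span {?\<phi>}" by (auto simp: istate.span_singleton)
    qed
    have "?\<phi> \<noteq> A_mode ?r 0 0 0" using u by (simp add: A_mode_eq_iff)
    then show "istate.independent {?\<phi>}" by (simp add: A_mode_0)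
  qed simp
  then show ?thesis by (simp add: cdimI_def)
qed

theorem mainTheorem8:
  fixes s t uL uR :: real
  assumes "\<bar>s\<bar> \<noteq> \<bar>t\<bar>"
  shows "bulk_gap (ssh_A t) (ssh_V s) \<and> odd (cdimI (kerI (H_SSH s t uL uR)))"
proof
  show "bulk_gap (ssh_A t) (ssh_V s)"
    using assms by (rule bulk_gap_ssh)
  consider "\<bar>t\<bar> < \<bar>s\<bar>" | "\<bar>s\<bar> < \<bar>t\<bar>" "uL = 0" "uR = 0" | "\<bar>s\<bar> < \<bar>t\<bar>" "uL \<noteq> 0 \<or> uR \<noteq> 0"
    using assms by linarith
  then show "odd (cdimI (kerI (H_SSH s t uL uR)))"
  proof cases
    case 1
    then show ?thesis by (simp add: cdimI_kerI_H_SSH_if_t_less_s)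
  next
    case 2
    then show ?thesis by (simp add: cdimI_kerI_H_SSH_if_s_less_t_decoupled)
  next
    case 3
    then show ?thesis by (simp add: cdimI_kerI_H_SSH_if_s_less_t_coupled)
  qed
qed

end
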